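(* Let $\Phi=\{\varphi_i\}_{i=1}^K$ be a homogeneous IFS on $\mathbb R^d$ with common contraction ratio $r\in(0,1)$ satisfying the strong separation condition, with self-similar set $X$, coding map $\pi:\Sigma\to X$ and induced map $T:X\to X$. Let $\psi:\mathbb N\to[0,\infty)$. Then there exists $N\in\mathbb N$ depending only on $\Phi$ such that $$\pi\big(R_{\lfloor\psi\rfloor+N}\big)\subseteq\tilde R_\psi\subseteq\pi\big(R_{\lfloor\psi\rfloor-N}\big).$$
   Context: A contracting similarity is a map $\varphi:\mathbb R^d\to\mathbb R^d$ with $\|\varphi(x)-\varphi(y)\|=r\|x-y\|$ for some $r\in(0,1)$; an IFS is a finite set $\Phi=\{\varphi_i\}_{i=1}^K$ of contracting similarities, homogeneous if all have the same ratio $r$. Its self-similar set is the unique nonempty compact $X$ with $X=\bigcup_i\varphi_i(X)$. With $\Sigma=\{1,\dots,K\}^{\mathbb N}$, $\pi(\mathbf i)=\lim_{n\to\infty}\varphi_{i_1}\circ\cdots\circ\varphi_{i_n}(0)$. $\Phi$ satisfies the strong separation condition if $\varphi_i(X)\cap\varphi_j(X)=\emptyset$ for $i\ne j$; then $T(x)=\varphi_i^{-1}(x)$ for $x\in\varphi_i(X)$. $\tilde R_\psi=\{x\in X:\|T^n(x)-x\|\le r^{\psi(n)}\text{ for infinitely many }n\in\mathbb N\}$ (Euclidean norm). On $\Sigma$, $|\mathbf i\wedge\mathbf j|=\inf\{n\ge0:i_{n+1}\ne j_{n+1}\}$, $d(\mathbf i,\mathbf j)=K^{-|\mathbf i\wedge\mathbf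 j|}$, $\sigma$ is the left shift, and for an integer-valued function $\phi$ on $\mathbb N$, $R_\phi=\{\mathbf i\in\Sigma:d(\sigma^n\mathbf i,\mathbf i)\le K^{-\phi(n)}\text{ for infinitely many }n\}$; here $\lfloor\psi\rfloor\pm N$ denotes $n\mapsto\lfloor\psi(n)\rfloor\pm N$. *)

theory Defs
  imports "HOL-Analysis.Analysis"
begin

text \<open>An IFS is given by maps phi 0, ..., phi (K-1) (0-based indexing).
  Symbolic space Sigma = sequences with values in {0..<K}; the sequence value at
  position k corresponds to the letter i_(k+1) of the paper.\<close>

definition homogeneous_ifs :: "nat \<Rightarrow> (nat \<Rightarrow> 'a::euclidean_space \<Rightarrow> 'a) \<Rightarrow> real \<Rightarrow> bool" where
  "homogeneous_ifs K \<phi> r \<longleftrightarrow> K \<ge> 1 \<and> 0 < r \<and> r < 1 \<and>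
     (\<forall>i<K. \<forall>x y. dist (\<phi> i x) (\<phi> i y) = r * dist x y)"

definition self_similar_set :: "nat \<Rightarrow> (nat \<Rightarrow> 'a::euclidean_space \<Rightarrow> 'a) \<Rightarrow> 'a set \<Rightarrow> bool" where
  "self_similar_set K \<phi> X \<longleftrightarrow> compact X \<and> X \<noteq> {} \<and> X = (\<Union>i<K. \<phi> i ` X)"

definition strong_separation :: "nat \<Rightarrow> (nat \<Rightarrow> 'a \<Rightarrow> 'a) \<Rightarrow> 'a set \<Rightarrow> bool" where
  "strong_separation K \<phi> X \<longleftrightarrow>
     (\<forall>i<K. \<forall>j<K. i \<noteq> j \<longrightarrow> \<phi> i ` X \<inter> \<phi> j ` X = {})"

definition code_space :: "nat \<Rightarrow> (nat \<Rightarrow> nat) set" where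
  "code_space K = {w. \<forall>k. w k < K}"

fun ifs_comp :: "(nat \<Rightarrow> 'a \<Rightarrow> 'a) \<Rightarrow> (nat \<Rightarrow> nat) \<Rightarrow> nat \<Rightarrow> 'a \<Rightarrow> 'a" where
  "ifs_comp \<phi> w 0 = id"
| "ifs_comp \<phi> w (Suc n) = ifs_comp \<phi> w n \<circ> \<phi> (w n)"

definition coding_map :: "(nat \<Rightarrow> 'a::euclidean_space \<Rightarrow> 'a) \<Rightarrow> (nat \<Rightarrow> nat) \<Rightarrow> 'a" where
  "coding_map \<phi> w = lim (\<lambda>n. ifs_comp \<phi> w n 0)"

definition induced_map :: "nat \<Rightarrow> (nat \<Rightarrow> 'a \<Rightarrow> 'a) \<Rightarrow> 'a set \<Rightarrow> 'a \<Rightarrow> 'a" where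
  "induced_map K \<phi> X x = inv (\<phi> (THE i. i < K \<and> x \<in> \<phi> i ` X)) x"

definition sym_dist :: "nat \<Rightarrow> (nat \<Rightarrow> nat) \<Rightarrow> (nat \<Rightarrow> nat) \<Rightarrow> real" where
  "sym_dist K w v = (if w = v then 0 else real K powi (- int (LEAST n. w n \<noteq> v n)))"

definition shift :: "(nat \<Rightarrow> nat) \<Rightarrow> (nat \<Rightarrow> nat)" where
  "shift w = (\<lambda>k. w (Suc k))"

definition sym_recurrence_set :: "nat \<Rightarrow> (nat \<Rightarrow> int) \<Rightarrow> (nat \<Rightarrow> nat) set" where
  "sym_recurrence_set K f = {w \<in> code_space K.
      infinite {n. sym_dist K ((shift ^^ n) w) w \<le> real K powi (- f n)}}"

definition recurrence_set ::
  "nat \<Rightarrow> (nat \<Rightarrow> 'a::euclidean_space \<Rightarrow> 'a) \<Rightarrow> real \<Rightarrow> 'a set \<Rightarrow> (nat \<Rightarrow> real) \<Rightarrow> 'a set" where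
  "recurrence_set K \<phi> r X \<psi> = {x \<in> X.
      infinite {n. norm ((induced_map K \<phi> X ^^ n) x - x) \<le> r powr (\<psi> n)}}"

end

(* Let k be the length of the common prefix of two codes v, w, so that d(v, w) = K^-k.
   Then pi v and pi w are images of two points of X under the same composition of k
   similarities, hence |pi v - pi w| <= r^k diam X; strong separation of the compact
   first-level pieces gives delta > 0 with |pi v - pi w| >= r^k delta.  So the two
   distances are r^k and K^-k up to constant factors, i.e. the exponents agree up to a
   bounded shift.  Since T (pi w) = pi (sigma w), applying this to v = sigma^n w turns
   each recurrence condition into the other, with N absorbing log_r delta and
   log_r diam X. *)

theory Submission
  imports Defs
begin

lemma convergent_if_dist_Suc_le_geometric:
  fixes f :: "nat \<Rightarrow> 'a::banach"
  assumes "\<And>n. dist (f (Suc n)) (f n) \<le> C * q ^ n" and "0 \<le> q" "q < 1"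
  shows "convergent f"
proof -
  have "summable (\<lambda>n. f (Suc n) - f n)"
    by (rule summable_comparison_test'[where g = "\<lambda>n. C * q ^ n" and N = 0])
      (use assms in \<open>auto simp: dist_norm intro: summable_mult summable_geometric\<close>)
  then have "(\<lambda>n. f 0 + (\<Sum>k<n. f (Suc k) - f k)) \<longlonglongrightarrow> f 0 + (\<Sum>k. f (Suc k) - f k)"
    by (intro tendsto_add tendsto_const summable_LIMSEQ)
  then show ?thesis
    unfolding sum_lessThan_telescope by (auto simp: convergent_def)
qed

lemma finite_disjoint_compacts_separated:
  fixes A :: "'i \<Rightarrow> 'a::heine_borel set"
  assumes "finite I" and compact: "\<And>i. i \<in> I \<Longrightarrow> compact (A i)"
    and disjoint: "\<And>i j. i \<in> I \<Longrightarrow> j \<in> I \<Longrightarrow> i \<noteq> j \<Longrightarrow> A i \<inter> A j = {}"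
  shows "\<exists>\<delta>>0. \<forall>i\<in>I. \<forall>j\<in>I. i \<noteq> j \<longrightarrow> (\<forall>x\<in>A i. \<forall>y\<in>A j. \<delta> \<le> dist x y)"
proof -
  have separated_pair: "\<forall>\<^sub>F \<delta> in at_right 0. i \<noteq> j \<longrightarrow> (\<forall>x\<in>A i. \<forall>y\<in>A j. \<delta> \<le> dist x y)"
    if ij: "i \<in> I" "j \<in> I" for i j
  proof (cases "i = j")
    case False
    then obtain d where "d > 0" and d: "\<forall>x\<in>A i. \<forall>y\<in>A j. d \<le> dist x y"
      using separate_compact_closed[of "A i" "A j"] compact disjoint ij
      by (metis compact_imp_closed)
    then show ?thesis
      unfolding eventually_at_right_field by (intro exI[of _ d]) force
  qed simp
  have "\<forall>\<^sub>F \<delta> in at_right 0. 0 < \<delta> \<and>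
      (\<forall>i\<in>I. \<forall>j\<in>I. i \<noteq> j \<longrightarrow> (\<forall>x\<in>A i. \<forall>y\<in>A j. \<delta> \<le> dist x y))"
    by (intro eventually_conj eventually_at_right_less eventually_ball_finite ballI
        separated_pair \<open>finite I\<close>)
  then show ?thesis
    using eventually_happens'[OF trivial_limit_at_right_real] by blast
qed

section \<open>The symbolic space\<close>

definition common_prefix_length :: "(nat \<Rightarrow> nat) \<Rightarrow> (nat \<Rightarrow> nat) \<Rightarrow> nat" where
  "common_prefix_length v w = (LEAST n. v n \<noteq> w n)"

lemma
  assumes "v \<noteq> w"
  shows common_prefix_length_differ:
      "v (common_prefix_length v w) \<noteq> w (common_prefix_length v w)"
    and common_prefix_length_agree: "m < common_prefix_length v w \<Longrightarrow> v m = w m"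
proof -
  have "\<exists>n. v n \<noteq> w n" using assms by auto
  then show "v (common_prefix_length v w) \<noteq> w (common_prefix_length v w)"
    unfolding common_prefix_length_def by (rule LeastI_ex)
  show "m < common_prefix_length v w \<Longrightarrow> v m = w m"
    unfolding common_prefix_length_def using not_less_Least by blast
qed

lemma sym_dist_self [simp]: "sym_dist K w w = 0"
  by (simp add: sym_dist_def)

lemma sym_dist_le_powi_iff:
  assumes "2 \<le> K" and "v \<noteq> w"
  shows "sym_dist K v w \<le> real K powi (- m) \<longleftrightarrow> m \<le> int (common_prefix_length v w)"
proof -
  have "real K powi a \<le> real K powi b \<longleftrightarrow> a \<le> b" for a b
    using power_int_increasing[of a b "real K"] power_int_strict_increasing[of b a "real K"]
      assms(1) by (cases "a \<le> b") auto
  then show ?thesis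
    using assms(2) by (simp add: sym_dist_def common_prefix_length_def)
qed

lemma funpow_shift_apply: "(shift ^^ n) w k = w (n + k)"
  by (induction n arbitrary: k) (auto simp: shift_def)

lemma funpow_shift_in_code_space: "w \<in> code_space K \<Longrightarrow> (shift ^^ n) w \<in> code_space K"
  by (simp add: code_space_def funpow_shift_apply)

lemma code_space_distinct_imp_two_le:
  assumes "v \<in> code_space K" "w \<in> code_space K" "v \<noteq> w"
  shows "2 \<le> K"
proof (rule ccontr)
  assume "\<not> 2 \<le> K"
  then have "K \<le> 1" by simp
  then have "v k < 1" "w k < 1" for k
    using assms(1,2) unfolding code_space_def by (metis mem_Collect_eq order_less_le_trans)+
  then have "v = w" by auto
  then show False using assms(3) by blast
qed

lemma ifs_comp_add:
  "ifs_comp \<phi> w (n + m) = ifs_comp \<phi> w n \<circ> ifs_comp \<phi> ((shift ^^ n) w) m"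
  by (induction m) (auto simp: funpow_shift_apply comp_assoc)

lemma ifs_comp_cong: "(\<And>k. k < n \<Longrightarrow> v k = w k) \<Longrightarrow> ifs_comp \<phi> v n = ifs_comp \<phi> w n"
  by (induction n) auto

section \<open>Coding map and induced map of a separated homogeneous IFS\<close>

locale separated_homogeneous_ifs =
  fixes K :: nat and \<phi> :: "nat \<Rightarrow> 'a::euclidean_space \<Rightarrow> 'a" and r :: real and X :: "'a set"
  assumes homogeneous: "homogeneous_ifs K \<phi> r"
    and self_similar: "self_similar_set K \<phi> X"
    and separated: "strong_separation K \<phi> X"
begin

lemma r_pos: "0 < r" and r_less_1: "r < 1"
  using homogeneous unfolding homogeneous_ifs_def by auto

lemma dist_phi: "i < K \<Longrightarrow> dist (\<phi> i x) (\<phi> i y) = r * dist x y"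
  using homogeneous unfolding homogeneous_ifs_def by auto

lemma compact_X: "compact X" and X_nonempty: "X \<noteq> {}" and X_eq: "X = (\<Union>i<K. \<phi> i ` X)"
  using self_similar unfolding self_similar_set_def by auto

lemma phi_in_X: "i < K \<Longrightarrow> x \<in> X \<Longrightarrow> \<phi> i x \<in> X"
  using X_eq by blast

lemma inj_phi:
  assumes "i < K"
  shows "inj (\<phi> i)"
proof (rule injI)
  fix x y assume "\<phi> i x = \<phi> i y"
  then have "r * dist x y = 0" using dist_phi[OF assms, of x y] by simp
  then show "x = y" using r_pos by simp
qed

lemma dist_le_diameter: "x \<in> X \<Longrightarrow> y \<in> X \<Longrightarrow> dist x y \<le> diameter X"
  using compact_X compact_imp_bounded diameter_bounded_bound by blast

lemma LIMSEQ_power_mult_zero: "(\<lambda>n. r ^ n * c) \<longlonglongrightarrow> 0"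
  using r_pos r_less_1 by (intro tendsto_mult_left_zero LIMSEQ_power_zero) auto

lemma dist_ifs_comp:
  "w \<in> code_space K \<Longrightarrow> dist (ifs_comp \<phi> w n x) (ifs_comp \<phi> w n y) = r ^ n * dist x y"
  by (induction n arbitrary: x y) (auto simp: dist_phi code_space_def)

lemma ifs_comp_in_X: "w \<in> code_space K \<Longrightarrow> x \<in> X \<Longrightarrow> ifs_comp \<phi> w n x \<in> X"
  by (induction n arbitrary: x) (auto simp: phi_in_X code_space_def)

lemma tendsto_ifs_comp:
  assumes "w \<in> code_space K" and "(f \<longlongrightarrow> l) F"
  shows "((\<lambda>x. ifs_comp \<phi> w n (f x)) \<longlongrightarrow> ifs_comp \<phi> w n l) F"
proof -
  have "((\<lambda>x. r ^ n * dist (f x) l) \<longlongrightarrow> 0) F"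
    using assms(2) by (intro tendsto_mult_right_zero) (rule tendsto_dist_iff[THEN iffD1])
  then show ?thesis
    using dist_ifs_comp[OF assms(1)] by (subst tendsto_dist_iff) simp
qed

lemma LIMSEQ_ifs_comp_coding_map:
  assumes w: "w \<in> code_space K"
  shows "(\<lambda>n. ifs_comp \<phi> w n x) \<longlonglongrightarrow> coding_map \<phi> w"
proof -
  define M where "M = Max ((\<lambda>i. norm (\<phi> i 0)) ` {..<K})"
  have "dist (ifs_comp \<phi> w (Suc n) 0) (ifs_comp \<phi> w n 0) \<le> M * r ^ n" for n
  proof -
    have "dist (ifs_comp \<phi> w (Suc n) 0) (ifs_comp \<phi> w n 0) = r ^ n * norm (\<phi> (w n) 0)"
      using dist_ifs_comp[OF w] by (simp add: dist_norm)
    also have "\<dots> \<le> r ^ n * M"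
      using w r_pos unfolding M_def code_space_def by (intro mult_left_mono Max_ge) auto
    finally show ?thesis by (simp add: mult.commute)
  qed
  then have "convergent (\<lambda>n. ifs_comp \<phi> w n 0)"
    using r_pos r_less_1 by (intro convergent_if_dist_Suc_le_geometric) auto
  then have "(\<lambda>n. ifs_comp \<phi> w n 0) \<longlonglongrightarrow> coding_map \<phi> w"
    unfolding coding_map_def by (simp add: convergent_LIMSEQ_iff)
  moreover have "(\<lambda>n. dist (ifs_comp \<phi> w n x) (ifs_comp \<phi> w n 0)) \<longlonglongrightarrow> 0"
    using LIMSEQ_power_mult_zero[of "dist x 0"] dist_ifs_comp[OF w] by simp
  then have "(\<lambda>n. ifs_comp \<phi> w n x - ifs_comp \<phi> w n 0) \<longlonglongrightarrow> 0"
    by (simp add: dist_norm tendsto_norm_zero_iff)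
  ultimately show ?thesis
    by (rule Lim_transform)
qed

lemma coding_map_in_X:
  assumes w: "w \<in> code_space K"
  shows "coding_map \<phi> w \<in> X"
proof -
  obtain x where x: "x \<in> X" using X_nonempty by blast
  show ?thesis
    by (rule closed_sequentially[of X "\<lambda>n. ifs_comp \<phi> w n x"])
      (use compact_X compact_imp_closed ifs_comp_in_X[OF w x] LIMSEQ_ifs_comp_coding_map[OF w] in auto)
qed

lemma coding_map_eq_ifs_comp:
  assumes w: "w \<in> code_space K"
  shows "coding_map \<phi> w = ifs_comp \<phi> w n (coding_map \<phi> ((shift ^^ n) w))"
proof (rule LIMSEQ_unique)
  show "(\<lambda>m. ifs_comp \<phi> w (n + m) 0) \<longlonglongrightarrow> coding_map \<phi> w"
    using LIMSEQ_ignore_initial_segment[OF LIMSEQ_ifs_comp_coding_map[OF w], where k = n]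
    by (simp add: add.commute)
  show "(\<lambda>m. ifs_comp \<phi> w (n + m) 0) \<longlonglongrightarrow> ifs_comp \<phi> w n (coding_map \<phi> ((shift ^^ n) w))"
    unfolding ifs_comp_add o_apply
    by (intro tendsto_ifs_comp w LIMSEQ_ifs_comp_coding_map funpow_shift_in_code_space)
qed

lemma coding_map_eq_phi_shift:
  "w \<in> code_space K \<Longrightarrow> coding_map \<phi> w = \<phi> (w 0) (coding_map \<phi> (shift w))"
  using coding_map_eq_ifs_comp[of w 1] by simp

lemma induced_map_coding_map:
  assumes w: "w \<in> code_space K"
  shows "induced_map K \<phi> X (coding_map \<phi> w) = coding_map \<phi> (shift w)"
proof -
  have w0: "w 0 < K" using w by (simp add: code_space_def)
  have mem: "coding_map \<phi> w \<in> \<phi> (w 0) ` X"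
    using coding_map_eq_phi_shift[OF w] coding_map_in_X funpow_shift_in_code_space[OF w, of 1]
    by simp
  have "(THE i. i < K \<and> coding_map \<phi> w \<in> \<phi> i ` X) = w 0"
  proof (rule the_equality)
    show "w 0 < K \<and> coding_map \<phi> w \<in> \<phi> (w 0) ` X" using w0 mem ..
    show "i = w 0" if "i < K \<and> coding_map \<phi> w \<in> \<phi> i ` X" for i
      using separated w0 that mem unfolding strong_separation_def by blast
  qed
  then have "induced_map K \<phi> X (coding_map \<phi> w) = inv (\<phi> (w 0)) (coding_map \<phi> w)"
    by (simp add: induced_map_def)
  also have "\<dots> = coding_map \<phi> (shift w)"
    by (subst coding_map_eq_phi_shift[OF w]) (simp add: inj_phi[OF w0])
  finally show ?thesis .
qed

lemma funpow_induced_map_coding_map: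
  "w \<in> code_space K \<Longrightarrow>
    (induced_map K \<phi> X ^^ n) (coding_map \<phi> w) = coding_map \<phi> ((shift ^^ n) w)"
  by (induction n) (auto simp: induced_map_coding_map funpow_shift_in_code_space)

lemma X_subset_coding_map_image: "X \<subseteq> coding_map \<phi> ` code_space K"
proof
  fix x assume x: "x \<in> X"
  have "\<forall>y\<in>X. \<exists>i z. i < K \<and> z \<in> X \<and> y = \<phi> i z"
    using X_eq by blast
  then obtain I Y where I: "\<And>y. y \<in> X \<Longrightarrow> I y < K" and Y: "\<And>y. y \<in> X \<Longrightarrow> Y y \<in> X"
    and IY: "\<And>y. y \<in> X \<Longrightarrow> \<phi> (I y) (Y y) = y"
    by metis
  define xs where "xs k = (Y ^^ k) x" for k
  define w where "w k = I (xs k)" for k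
  have xs_in_X: "xs k \<in> X" for k
    by (induction k) (simp_all add: xs_def x Y)
  have w: "w \<in> code_space K"
    using I xs_in_X by (simp add: w_def code_space_def)
  have x_eq: "x = ifs_comp \<phi> w n (xs n)" for n
  proof (induction n)
    case (Suc n)
    have "\<phi> (w n) (xs (Suc n)) = xs n"
      using IY[OF xs_in_X[of n]] by (simp add: w_def xs_def)
    then show ?case using Suc by simp
  qed (simp add: xs_def)
  have "dist (coding_map \<phi> w) x \<le> r ^ n * diameter X" for n
  proof -
    have "dist (coding_map \<phi> w) x = r ^ n * dist (coding_map \<phi> ((shift ^^ n) w)) (xs n)"
      using coding_map_eq_ifs_comp[OF w, of n] x_eq[of n] dist_ifs_comp[OF w] by metis
    also have "\<dots> \<le> r ^ n * diameter X"
      using r_pos coding_map_in_X[OF funpow_shift_in_code_space[OF w]] xs_in_X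
      by (intro mult_left_mono dist_le_diameter) auto
    finally show ?thesis .
  qed
  then have "dist (coding_map \<phi> w) x \<le> 0"
    by (intro LIMSEQ_le_const[OF LIMSEQ_power_mult_zero]) blast
  then show "x \<in> coding_map \<phi> ` code_space K"
    using w by (intro image_eqI[of x _ w]) auto
qed

lemma dist_coding_map_common_prefix:
  assumes v: "v \<in> code_space K" and w: "w \<in> code_space K"
    and prefix: "\<And>m. m < k \<Longrightarrow> v m = w m"
  shows "dist (coding_map \<phi> v) (coding_map \<phi> w)
    = r ^ k * dist (coding_map \<phi> ((shift ^^ k) v)) (coding_map \<phi> ((shift ^^ k) w))"
  using coding_map_eq_ifs_comp[OF v, of k] coding_map_eq_ifs_comp[OF w, of k]
    ifs_comp_cong[of k v w \<phi>, OF prefix] dist_ifs_comp[OF w]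
  by simp

lemma dist_coding_map_le:
  assumes v: "v \<in> code_space K" and w: "w \<in> code_space K"
    and prefix: "\<And>m. m < k \<Longrightarrow> v m = w m"
  shows "dist (coding_map \<phi> v) (coding_map \<phi> w) \<le> r ^ k * diameter X"
proof -
  have "dist (coding_map \<phi> v) (coding_map \<phi> w)
      = r ^ k * dist (coding_map \<phi> ((shift ^^ k) v)) (coding_map \<phi> ((shift ^^ k) w))"
    by (rule dist_coding_map_common_prefix[OF v w prefix])
  also have "\<dots> \<le> r ^ k * diameter X"
    using r_pos v w
    by (intro mult_left_mono dist_le_diameter coding_map_in_X funpow_shift_in_code_space) auto
  finally show ?thesis .
qed

lemma separation_constant:
  "\<exists>\<delta>>0. \<forall>i<K. \<forall>j<K. i \<noteq> j \<longrightarrow> (\<forall>x\<in>X. \<forall>y\<in>X. \<delta> \<le> dist (\<phi> i x) (\<phi> j y))"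
proof -
  have "compact (\<phi> i ` X)" if "i < K" for i
  proof -
    have "r-lipschitz_on X (\<phi> i)"
      using dist_phi[OF that] r_pos by (intro lipschitz_onI) auto
    then show ?thesis
      using compact_continuous_image lipschitz_on_continuous_on compact_X by blast
  qed
  then show ?thesis
    using finite_disjoint_compacts_separated[of "{..<K}" "\<lambda>i. \<phi> i ` X"] separated
    unfolding strong_separation_def by (auto simp: ball_simps)
qed

lemma dist_coding_map_ge:
  assumes \<delta>: "\<forall>i<K. \<forall>j<K. i \<noteq> j \<longrightarrow> (\<forall>x\<in>X. \<forall>y\<in>X. \<delta> \<le> dist (\<phi> i x) (\<phi> j y))"
    and v: "v \<in> code_space K" and w: "w \<in> code_space K"
    and prefix: "\<And>m. m < k \<Longrightarrow> v m = w m" and differ: "v k \<noteq> w k"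
  shows "r ^ k * \<delta> \<le> dist (coding_map \<phi> v) (coding_map \<phi> w)"
proof -
  define v' w' where "v' = (shift ^^ k) v" and "w' = (shift ^^ k) w"
  have v': "v' \<in> code_space K" and w': "w' \<in> code_space K"
    using v w by (simp_all add: v'_def w'_def funpow_shift_in_code_space)
  have "v' 0 = v k" "w' 0 = w k" "v k < K" "w k < K"
    using v w by (simp_all add: v'_def w'_def funpow_shift_apply code_space_def)
  then have "\<delta> \<le> dist (coding_map \<phi> v') (coding_map \<phi> w')"
    using \<delta> differ coding_map_eq_phi_shift[OF v'] coding_map_eq_phi_shift[OF w']
      coding_map_in_X funpow_shift_in_code_space[OF v', of 1] funpow_shift_in_code_space[OF w', of 1]
    by auto
  then show ?thesis
    using dist_coding_map_common_prefix[OF v w prefix] r_pos by (simp add: v'_def w'_def)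
qed

lemma eventually_sym_dist_le_imp_dist_le:
  "\<forall>\<^sub>F N in sequentially. \<forall>v\<in>code_space K. \<forall>w\<in>code_space K. \<forall>t.
     sym_dist K v w \<le> real K powi (- (\<lfloor>t\<rfloor> + int N)) \<longrightarrow>
     dist (coding_map \<phi> v) (coding_map \<phi> w) \<le> r powr t"
proof -
  obtain n0 where n0: "r ^ n0 * diameter X < 1"
    using eventually_happens'[OF sequentially_bot
        order_tendstoD(2)[OF LIMSEQ_power_mult_zero zero_less_one]] by blast
  show ?thesis
  proof (rule eventually_sequentiallyI[of "Suc n0"], intro ballI allI impI)
    fix N :: nat and v w :: "nat \<Rightarrow> nat" and t :: real
    assume N: "Suc n0 \<le> N" and v: "v \<in> code_space K" and w: "w \<in> code_space K"
      and close: "sym_dist K v w \<le> real K powi (- (\<lfloor>t\<rfloor> + int N))"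
    show "dist (coding_map \<phi> v) (coding_map \<phi> w) \<le> r powr t"
    proof (cases "v = w")
      case False
      define k where "k = common_prefix_length v w"
      have "\<lfloor>t\<rfloor> + int N \<le> int k"
        unfolding k_def
        by (rule sym_dist_le_powi_iff[OF code_space_distinct_imp_two_le[OF v w False] False,
              THEN iffD1, OF close])
      then have "t + n0 \<le> k"
        using N by linarith
      then have r_power_k: "r ^ k \<le> r powr t * r ^ n0"
        using r_pos r_less_1 powr_mono'[of "t + n0" k r] by (simp add: powr_add powr_realpow)
      have "dist (coding_map \<phi> v) (coding_map \<phi> w) \<le> r ^ k * diameter X"
        using dist_coding_map_le[OF v w] common_prefix_length_agree[OF False] k_def by blast
      also have "\<dots> \<le> r powr t * (r ^ n0 * diameter X)"
        using r_power_k diameter_ge_0[OF compact_imp_bounded[OF compact_X]]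
        by (metis mult.assoc mult_right_mono)
      also have "\<dots> \<le> r powr t"
        using n0 by (simp add: mult_left_le)
      finally show ?thesis .
    qed simp
  qed
qed

lemma eventually_dist_le_imp_sym_dist_le:
  "\<forall>\<^sub>F N in sequentially. \<forall>v\<in>code_space K. \<forall>w\<in>code_space K. \<forall>t.
     dist (coding_map \<phi> v) (coding_map \<phi> w) \<le> r powr t \<longrightarrow>
     sym_dist K v w \<le> real K powi (- (\<lfloor>t\<rfloor> - int N))"
proof -
  obtain \<delta> where "\<delta> > 0"
    and \<delta>: "\<forall>i<K. \<forall>j<K. i \<noteq> j \<longrightarrow> (\<forall>x\<in>X. \<forall>y\<in>X. \<delta> \<le> dist (\<phi> i x) (\<phi> j y))"
    using separation_constant by blast
  have "\<forall>\<^sub>F N in sequentially. r ^ N < \<delta>"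
    using order_tendstoD(2)[OF LIMSEQ_power_mult_zero[of 1] \<open>\<delta> > 0\<close>] by simp
  then show ?thesis
  proof (rule eventually_mono, intro ballI allI impI)
    fix N :: nat and v w :: "nat \<Rightarrow> nat" and t :: real
    assume N: "r ^ N < \<delta>" and v: "v \<in> code_space K" and w: "w \<in> code_space K"
      and close: "dist (coding_map \<phi> v) (coding_map \<phi> w) \<le> r powr t"
    show "sym_dist K v w \<le> real K powi (- (\<lfloor>t\<rfloor> - int N))"
    proof (cases "v = w")
      case False
      define k where "k = common_prefix_length v w"
      have "\<lfloor>t\<rfloor> - int N \<le> int k"
      proof (rule ccontr)
        assume "\<not> \<lfloor>t\<rfloor> - int N \<le> int k"
        then have "real (k + N) \<le> t" by linarith
        then have "r powr t \<le> r ^ k * r ^ N"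
          using r_pos r_less_1 powr_mono'[of "k + N" t r] by (simp add: powr_add powr_realpow)
        also have "\<dots> < r ^ k * \<delta>"
          using N r_pos by simp
        also have "\<dots> \<le> dist (coding_map \<phi> v) (coding_map \<phi> w)"
          using dist_coding_map_ge[OF \<delta> v w] common_prefix_length_agree[OF False]
            common_prefix_length_differ[OF False] k_def by blast
        finally show False using close by simp
      qed
      then show ?thesis
        unfolding k_def
        by (rule sym_dist_le_powi_iff[OF code_space_distinct_imp_two_le[OF v w False] False,
              THEN iffD2])
    qed simp
  qed
qed

lemma image_sym_recurrence_set_subset_recurrence_set:
  assumes "\<And>v w n. v \<in> code_space K \<Longrightarrow> w \<in> code_space K \<Longrightarrow>
      sym_dist K v w \<le> real K powi (- f n) \<Longrightarrow>
      dist (coding_map \<phi> v) (coding_map \<phi> w) \<le> r powr \<psi> n"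
  shows "coding_map \<phi> ` sym_recurrence_set K f \<subseteq> recurrence_set K \<phi> r X \<psi>"
proof
  fix x assume "x \<in> coding_map \<phi> ` sym_recurrence_set K f"
  then obtain w where w: "w \<in> code_space K" and x: "x = coding_map \<phi> w"
    and recurrent: "infinite {n. sym_dist K ((shift ^^ n) w) w \<le> real K powi (- f n)}"
    unfolding sym_recurrence_set_def by blast
  have "{n. sym_dist K ((shift ^^ n) w) w \<le> real K powi (- f n)}
      \<subseteq> {n. norm ((induced_map K \<phi> X ^^ n) x - x) \<le> r powr \<psi> n}"
    using assms[OF funpow_shift_in_code_space[OF w] w] funpow_induced_map_coding_map[OF w]
    by (auto simp: x dist_norm)
  then show "x \<in> recurrence_set K \<phi> r X \<psi>"
    using infinite_super[OF _ recurrent] coding_map_in_X[OF w]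
    by (auto simp: recurrence_set_def x)
qed

lemma recurrence_set_subset_image_sym_recurrence_set:
  assumes "\<And>v w n. v \<in> code_space K \<Longrightarrow> w \<in> code_space K \<Longrightarrow>
      dist (coding_map \<phi> v) (coding_map \<phi> w) \<le> r powr \<psi> n \<Longrightarrow>
      sym_dist K v w \<le> real K powi (- f n)"
  shows "recurrence_set K \<phi> r X \<psi> \<subseteq> coding_map \<phi> ` sym_recurrence_set K f"
proof
  fix x assume "x \<in> recurrence_set K \<phi> r X \<psi>"
  then have "x \<in> X" and recurrent:
      "infinite {n. norm ((induced_map K \<phi> X ^^ n) x - x) \<le> r powr \<psi> n}"
    unfolding recurrence_set_def by auto
  then obtain w where w: "w \<in> code_space K" and x: "x = coding_map \<phi> w"
    using X_subset_coding_map_image by blast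
  have "{n. norm ((induced_map K \<phi> X ^^ n) x - x) \<le> r powr \<psi> n}
      \<subseteq> {n. sym_dist K ((shift ^^ n) w) w \<le> real K powi (- f n)}"
    using assms[OF funpow_shift_in_code_space[OF w] w] funpow_induced_map_coding_map[OF w]
    by (auto simp: x dist_norm)
  then have "w \<in> sym_recurrence_set K f"
    using infinite_super[OF _ recurrent] w by (simp add: sym_recurrence_set_def)
  then show "x \<in> coding_map \<phi> ` sym_recurrence_set K f"
    using x by blast
qed

end

theorem proposition7p1:
  fixes K :: nat and \<phi> :: "nat \<Rightarrow> 'a::euclidean_space \<Rightarrow> 'a" and r :: real and X :: "'a set"
  assumes "homogeneous_ifs K \<phi> r"
    and "self_similar_set K \<phi> X"
    and "strong_separation K \<phi> X"
  shows "\<exists>N::nat. \<forall>\<psi>::nat \<Rightarrow> real. (\<forall>n. 0 \<le> \<psi> n) \<longrightarrow>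
      coding_map \<phi> ` sym_recurrence_set K (\<lambda>n. \<lfloor>\<psi> n\<rfloor> + int N) \<subseteq> recurrence_set K \<phi> r X \<psi> \<and>
      recurrence_set K \<phi> r X \<psi> \<subseteq> coding_map \<phi> ` sym_recurrence_set K (\<lambda>n. \<lfloor>\<psi> n\<rfloor> - int N)"
proof -
  interpret separated_homogeneous_ifs K \<phi> r X
    using assms by unfold_locales
  obtain N where inner: "\<forall>v\<in>code_space K. \<forall>w\<in>code_space K. \<forall>t.
        sym_dist K v w \<le> real K powi (- (\<lfloor>t\<rfloor> + int N)) \<longrightarrow>
        dist (coding_map \<phi> v) (coding_map \<phi> w) \<le> r powr t"
    and outer: "\<forall>v\<in>code_space K. \<forall>w\<in>code_space K. \<forall>t.
        dist (coding_map \<phi> v) (coding_map \<phi> w) \<le> r powr t \<longrightarrow>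
        sym_dist K v w \<le> real K powi (- (\<lfloor>t\<rfloor> - int N))"
    using eventually_happens'[OF sequentially_bot
        eventually_conj[OF eventually_sym_dist_le_imp_dist_le eventually_dist_le_imp_sym_dist_le]]
    by blast
  \<comment> \<open>The comparison holds for every real \<open>\<psi>\<close>.\<close>
  show ?thesis
  proof (intro exI[of _ N] allI impI conjI)
    fix \<psi> :: "nat \<Rightarrow> real"
    show "coding_map \<phi> ` sym_recurrence_set K (\<lambda>n. \<lfloor>\<psi> n\<rfloor> + int N) \<subseteq> recurrence_set K \<phi> r X \<psi>"
      using inner by (intro image_sym_recurrence_set_subset_recurrence_set) blast
    show "recurrence_set K \<phi> r X \<psi> \<subseteq> coding_map \<phi> ` sym_recurrence_set K (\<lambda>n. \<lfloor>\<psi> n\<rfloor> - int N)"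
      using outer by (intro recurrence_set_subset_image_sym_recurrence_set) blast
  qed
qed

end
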